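(* Let $n \ge 1$ and let $x_1, \dots, x_n$ be real numbers satisfying $$x_1 > -x_2 > x_3 > \cdots > (-1)^{n+1} x_n > 0,$$ i.e. $(-1)^{i+1}x_i > (-1)^{i+2}x_{i+1}$ for $1 \le i \le n-1$ and $(-1)^{n+1}x_n > 0$. For $1 \le r \le n$ let $$s_r = \sum_{1 \le i_1 < i_2 < \cdots < i_r \le n} x_{i_1} x_{i_2} \cdots x_{i_r}$$ be the $r$-th elementary symmetric polynomial in $x_1,\dots,x_n$. Then for every integer $d \ge 0$ (and whenever the index lies in $\{1,\dots,n\}$): $$s_{4d+1} > 0,\quad s_{4d+2} < 0,\quad s_{4d+3} < 0,\quad s_{4d+4} > 0.$$ *)

theory Defs
  imports Complex_Main
begin

definition elem_sym :: "nat \<Rightarrow> (nat \<Rightarrow> real) \<Rightarrow> nat \<Rightarrow> real" where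
  "elem_sym n x r = (\<Sum>S \<in> {S. S \<subseteq> {1..n} \<and> card S = r}. \<Prod>i\<in>S. x i)"

end

theory Submission
  imports Defs
begin

text \<open>Put y i = (-1)^(i+1) * x i, so that y 1 > y 2 > ... > y n > 0. The claimed sign of s r
  is (-1)^(r choose 2), and for G m r = (-1)^(r choose 2) * s r (x 1, ..., x m) Pascal's recurrence
  reads G (m+1) (r+1) = G m (r+1) + (-1)^(m+r) * y (m+1) * G m r. By induction on m, G m r > 0
  for r \<le> m. If m + r is even, both summands are harmless. If it is odd, unfolding once more gives
  G (m+1) (r+1) = G (m-1) (r+1) + y m * G (m-1) r - y (m+1) * G m r, and here G m r \<le> G (m-1) r
  (again by the recurrence) together with y m > y (m+1) makes the right-hand side positive.\<close>

lemma card_subsets_insert_eq: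
  assumes "finite A" "a \<notin> A"
  shows "{S. S \<subseteq> insert a A \<and> card S = Suc k} =
    {S. S \<subseteq> A \<and> card S = Suc k} \<union> insert a ` {S. S \<subseteq> A \<and> card S = k}"
proof (intro equalityI subsetI)
  fix S assume S: "S \<in> {S. S \<subseteq> insert a A \<and> card S = Suc k}"
  then have "finite S" using assms(1) finite_subset by auto
  show "S \<in> {S. S \<subseteq> A \<and> card S = Suc k} \<union> insert a ` {S. S \<subseteq> A \<and> card S = k}"
  proof (cases "a \<in> S")
    case True
    then have "S = insert a (S - {a})" "S - {a} \<subseteq> A" "card (S - {a}) = k"
      using S \<open>finite S\<close> by auto
    then show ?thesis by blast
  qed (use S in auto)
next
  fix S assume "S \<in> {S. S \<subseteq> A \<and> card S = Suc k} \<union> insert a ` {S. S \<subseteq> A \<and> card S = k}"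
  then show "S \<in> {S. S \<subseteq> insert a A \<and> card S = Suc k}"
    using assms finite_subset by (auto simp: card_insert_if)
qed

lemma sum_prod_subsets_insert:
  fixes f :: "'a \<Rightarrow> 'b::comm_semiring_1"
  assumes "finite A" "a \<notin> A"
  shows "(\<Sum>S | S \<subseteq> insert a A \<and> card S = Suc k. \<Prod>i\<in>S. f i) =
    (\<Sum>S | S \<subseteq> A \<and> card S = Suc k. \<Prod>i\<in>S. f i) + f a * (\<Sum>S | S \<subseteq> A \<and> card S = k. \<Prod>i\<in>S. f i)"
proof -
  let ?P = "\<lambda>k. {S. S \<subseteq> A \<and> card S = k}"
  have fin: "finite (?P k)" for k
    by (rule finite_subset[of _ "Pow A"]) (use assms(1) in auto)
  have inj: "inj_on (insert a) (?P k)"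
  proof (rule inj_onI)
    fix S T assume "S \<in> ?P k" "T \<in> ?P k" "insert a S = insert a T"
    then show "S = T" using assms(2) by (metis CollectD insert_ident subsetD)
  qed
  have "(\<Sum>S\<in>insert a ` ?P k. \<Prod>i\<in>S. f i) = (\<Sum>S\<in>?P k. \<Prod>i\<in>insert a S. f i)"
    using inj by (simp add: sum.reindex)
  also have "\<dots> = (\<Sum>S\<in>?P k. f a * (\<Prod>i\<in>S. f i))"
  proof (rule sum.cong)
    fix S assume "S \<in> ?P k"
    then have "finite S" "a \<notin> S" using assms rev_finite_subset by blast+
    then show "(\<Prod>i\<in>insert a S. f i) = f a * (\<Prod>i\<in>S. f i)" by simp
  qed (rule refl)
  finally have "(\<Sum>S\<in>insert a ` ?P k. \<Prod>i\<in>S. f i) = f a * (\<Sum>S\<in>?P k. \<Prod>i\<in>S. f i)"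
    by (simp only: sum_distrib_left)
  moreover have "?P (Suc k) \<inter> insert a ` ?P k = {}"
    using assms(2) by blast
  ultimately show ?thesis
    unfolding card_subsets_insert_eq[OF assms] using fin by (simp add: sum.union_disjoint)
qed

lemma elem_sym_0 [simp]: "elem_sym m x 0 = 1"
proof -
  have "{S. S \<subseteq> {1..m} \<and> card S = 0} = {{}}"
    by (auto dest: finite_subset)
  then show ?thesis by (simp add: elem_sym_def)
qed

lemma elem_sym_eq_0:
  assumes "m < r"
  shows "elem_sym m x r = 0"
proof -
  have "card S \<le> m" if "S \<subseteq> {1..m}" for S
    using card_mono[OF finite_atLeastAtMost that] by simp
  with assms have "{S. S \<subseteq> {1..m} \<and> card S = r} = {}"
    by (auto simp: not_le[symmetric])
  then show ?thesis
    unfolding elem_sym_def by (metis sum.empty)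
qed

lemma elem_sym_Suc:
  "elem_sym (Suc m) x (Suc r) = elem_sym m x (Suc r) + x (Suc m) * elem_sym m x r"
proof -
  have "{1..Suc m} = insert (Suc m) {1..m}"
    by (simp add: atLeastAtMostSuc_conv)
  then show ?thesis
    unfolding elem_sym_def by (simp only:) (rule sum_prod_subsets_insert; simp)
qed

lemma choose_two_Suc: "Suc r choose 2 = r + (r choose 2)"
  using binomial_Suc_Suc[of r 1] by (simp only: Suc_1 choose_one)

definition signed_elem_sym :: "nat \<Rightarrow> (nat \<Rightarrow> real) \<Rightarrow> nat \<Rightarrow> real" where
  "signed_elem_sym m x r = (-1) ^ (r choose 2) * elem_sym m x r"

lemma signed_elem_sym_0 [simp]: "signed_elem_sym m x 0 = 1"
  by (simp add: signed_elem_sym_def binomial_eq_0)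

lemma signed_elem_sym_eq_0: "m < r \<Longrightarrow> signed_elem_sym m x r = 0"
  by (simp add: signed_elem_sym_def elem_sym_eq_0)

lemma signed_elem_sym_Suc:
  "signed_elem_sym (Suc m) x (Suc r) =
    signed_elem_sym m x (Suc r) + (-1) ^ r * x (Suc m) * signed_elem_sym m x r"
  by (simp add: signed_elem_sym_def elem_sym_Suc choose_two_Suc power_add algebra_simps)

lemma choose_two_add_4: "(r + 4) choose 2 = (r choose 2) + 2 * (2 * r + 3)"
  by (simp add: numeral_eq_Suc)

lemma neg_one_power_choose_two_add_4:
  "(-1::'a::ring_1) ^ ((r + 4) choose 2) = (-1) ^ (r choose 2)"
  by (simp add: choose_two_add_4 power_add power_mult)

lemma neg_one_power_choose_two_mod_4:
  "(-1::'a::ring_1) ^ ((4*d+1) choose 2) = 1 \<and> (-1::'a) ^ ((4*d+2) choose 2) = -1 \<and>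
   (-1::'a) ^ ((4*d+3) choose 2) = -1 \<and> (-1::'a) ^ ((4*d+4) choose 2) = 1"
proof (induction d)
  case 0
  then show ?case by (simp add: numeral_eq_Suc)
next
  case (Suc d)
  have "4 * Suc d + k = (4 * d + k) + 4" for k
    by simp
  then show ?case
    using Suc by (simp only: neg_one_power_choose_two_add_4)
qed

lemma le_of_strict_decreasing:
  fixes y :: "nat \<Rightarrow> 'a::order"
  assumes "\<And>k. 1 \<le> k \<Longrightarrow> k < n \<Longrightarrow> y (Suc k) < y k" and "1 \<le> i" "i \<le> n"
  shows "y n \<le> y i"
  using assms(3)
proof (induction i rule: inc_induct)
  case (step k)
  then show ?case using assms(1)[of k] assms(2) by fastforce
qed simp

definition alternate :: "(nat \<Rightarrow> real) \<Rightarrow> nat \<Rightarrow> real" where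
  "alternate y i = (-1) ^ (i + 1) * y i"

lemma alternate_alternate [simp]: "alternate (alternate y) = y"
  by (simp add: alternate_def fun_eq_iff flip: mult.assoc power_mult_distrib)

lemma signed_elem_sym_alternate_Suc:
  "signed_elem_sym (Suc k) (alternate y) (Suc s) =
    signed_elem_sym k (alternate y) (Suc s) + (-1) ^ (k + s) * y (Suc k) * signed_elem_sym k (alternate y) s"
  by (simp add: signed_elem_sym_Suc alternate_def power_add)

lemma signed_elem_sym_alternate_Suc_le:
  assumes "even (k + s)" "0 \<le> y (Suc k)"
    and "\<And>t. s = Suc t \<Longrightarrow> 0 \<le> signed_elem_sym k (alternate y) t"
  shows "signed_elem_sym (Suc k) (alternate y) s \<le> signed_elem_sym k (alternate y) s"
proof (cases s)
  case (Suc t)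
  with assms(1) have "signed_elem_sym (Suc k) (alternate y) s =
      signed_elem_sym k (alternate y) s - y (Suc k) * signed_elem_sym k (alternate y) t"
    by (simp add: signed_elem_sym_alternate_Suc)
  with assms(2) assms(3)[OF Suc] show ?thesis
    by simp
qed simp

lemma signed_elem_sym_alternate_pos:
  fixes y :: "nat \<Rightarrow> real"
  assumes dec: "\<And>i. 1 \<le> i \<Longrightarrow> i < n \<Longrightarrow> y (Suc i) < y i"
    and pos: "\<And>i. 1 \<le> i \<Longrightarrow> i \<le> n \<Longrightarrow> 0 < y i"
    and "m \<le> n" "r \<le> m"
  shows "0 < signed_elem_sym m (alternate y) r"
  using assms(3,4)
proof (induction m arbitrary: r rule: less_induct)
  case (less m)
  define G where "G k = signed_elem_sym k (alternate y)" for k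
  have G_Suc: "G (Suc k) (Suc s) = G k (Suc s) + (-1) ^ (k + s) * y (Suc k) * G k s" for k s
    unfolding G_def by (rule signed_elem_sym_alternate_Suc)
  have G_pos: "0 < G k s" if "k < m" "s \<le> k" for k s
    using less.IH that less.prems unfolding G_def by simp
  have G_nonneg: "0 \<le> G k s" if "k < m" for k s
    using G_pos[OF that, of s] by (cases "s \<le> k") (auto simp: G_def signed_elem_sym_eq_0)
  show ?case
  proof (cases r)
    case 0
    then show ?thesis by simp
  next
    case (Suc s)
    with less.prems obtain k where m: "m = Suc k" and "s \<le> k"
      by (cases m) auto
    have y_pos: "0 < y (Suc k)"
      using pos less.prems m by simp
    show ?thesis
    proof (cases "even (k + s)")
      case True
      then have "G m r = G k r + y (Suc k) * G k s"
        using G_Suc m Suc by simp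
      with G_nonneg[of k r] G_pos[of k s] \<open>s \<le> k\<close> y_pos m show ?thesis
        unfolding G_def by (simp add: add_nonneg_pos)
    next
      case False
      with \<open>s \<le> k\<close> obtain j where k: "k = Suc j" and "s \<le> j"
        by (cases k) (auto simp: le_Suc_eq)
      have y_dec: "y (Suc k) < y (Suc j)"
        using dec[of "Suc j"] less.prems m k by simp
      have G_le: "G k s \<le> G j s"
        unfolding G_def k
        using False k pos[of "Suc j"] G_nonneg[of j] less.prems m
        by (intro signed_elem_sym_alternate_Suc_le) (simp_all add: G_def)
      have "G m r = G j r + y (Suc j) * G j s - y (Suc k) * G k s"
        using G_Suc[of k s] G_Suc[of j s] False m k Suc by simp
      also have "\<dots> \<ge> G j r + (y (Suc j) - y (Suc k)) * G j s"
        using G_le y_pos by (simp add: algebra_simps mult_left_mono)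
      finally have "G j r + (y (Suc j) - y (Suc k)) * G j s \<le> G m r" .
      moreover have "0 < G j r + (y (Suc j) - y (Suc k)) * G j s"
        using G_nonneg[of j r] G_pos[of j s] \<open>s \<le> j\<close> y_dec m k by (simp add: add_nonneg_pos)
      ultimately show ?thesis
        unfolding G_def by simp
    qed
  qed
qed

theorem theorem1:
  fixes n :: nat and x :: "nat \<Rightarrow> real"
  assumes "n \<ge> 1"
    and "\<And>i. 1 \<le> i \<Longrightarrow> i \<le> n - 1 \<Longrightarrow>
           (-1) ^ (i + 1) * x i > (-1) ^ (i + 2) * x (i + 1)"
    and "(-1) ^ (n + 1) * x n > 0"
  shows "\<forall>d::nat.
           (4*d+1 \<le> n \<longrightarrow> elem_sym n x (4*d+1) > 0) \<and>
           (4*d+2 \<le> n \<longrightarrow> elem_sym n x (4*d+2) < 0) \<and>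
           (4*d+3 \<le> n \<longrightarrow> elem_sym n x (4*d+3) < 0) \<and>
           (4*d+4 \<le> n \<longrightarrow> elem_sym n x (4*d+4) > 0)"
proof -
  define y where "y = alternate x"
  have dec: "y (Suc i) < y i" if "1 \<le> i" "i < n" for i
    using assms(2)[of i] that by (simp add: y_def alternate_def)
  have pos: "0 < y i" if "1 \<le> i" "i \<le> n" for i
    using le_of_strict_decreasing[where y = y, OF dec that] assms(3) by (simp add: y_def alternate_def)
  have sign: "0 < (-1) ^ (r choose 2) * elem_sym n x r" if "r \<le> n" for r
    using signed_elem_sym_alternate_pos[where y = y and n = n and m = n, OF dec pos order.refl that]
    by (simp add: signed_elem_sym_def y_def)
  show ?thesis
  proof (intro allI conjI impI)
    fix d :: nat
    note signs = neg_one_power_choose_two_mod_4[where 'a = real and d = d]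
    show "0 < elem_sym n x (4*d+1)" if "4*d+1 \<le> n"
      using sign[OF that] signs by simp
    show "elem_sym n x (4*d+2) < 0" if "4*d+2 \<le> n"
      using sign[OF that] signs by simp
    show "elem_sym n x (4*d+3) < 0" if "4*d+3 \<le> n"
      using sign[OF that] signs by simp
    show "0 < elem_sym n x (4*d+4)" if "4*d+4 \<le> n"
      using sign[OF that] signs by simp
  qed
qed

end
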